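(* Let $\mathcal{B}$ be a unital Banach algebra, $q\in\mathbb{C}$ with $0<|q|<1$, and $x,y\in\mathcal{B}$ with $xy=q^{-1}yx$, such that the spectrum $\sigma(x)$ of $x$ in $\mathcal{B}$ satisfies $\sigma(x)_q=\sigma(x)$. Then every finite sum $f=\sum_{k\ge1}r_k(x)y^k$, where each $r_k$ is a rational function with no poles on $\sigma(x)$ and $r_k(0)=0$, is quasinilpotent in $\mathcal{B}$ (equivalently, in the closed subalgebra $\mathcal{A}_{q,x}$).
   Context: For $S\subseteq\mathbb{C}$, $S_q=\{0\}\cup\bigcup_{n\ge0}q^nS$ is its $q$-hull. For a rational function $r$ without poles on $\sigma(x)$, $r(x)\in\mathcal{B}$ is defined by the holomorphic (rational) functional calculus. $\mathcal{A}_{q,x}$ is the norm closure in $\mathcal{B}$ of the subalgebra generated by $y$ and all such $r(x)$. Quasinilpotent means spectrum $\{0\}$ (spectral radius zero). *)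

theory Defs
  imports "HOL-Analysis.Analysis" "HOL-Computational_Algebra.Polynomial"
begin

class complex_banach_algebra_1 = real_normed_algebra_1 + banach +
  fixes scaleC :: "complex \<Rightarrow> 'a \<Rightarrow> 'a" (infixr \<open>*\<^sub>C\<close> 75)
  assumes scaleC_add_right: "a *\<^sub>C (x + y) = a *\<^sub>C x + a *\<^sub>C y"
    and scaleC_add_left: "(a + b) *\<^sub>C x = a *\<^sub>C x + b *\<^sub>C x"
    and scaleC_scaleC: "a *\<^sub>C (b *\<^sub>C x) = (a * b) *\<^sub>C x"
    and scaleC_one: "1 *\<^sub>C x = x"
    and scaleR_scaleC: "scaleR r x = complex_of_real r *\<^sub>C x"
    and norm_scaleC: "norm (a *\<^sub>C x) = cmod a * norm x"
    and mult_scaleC_left: "(a *\<^sub>C x) * y = a *\<^sub>C (x * y)"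
    and mult_scaleC_right: "x * (a *\<^sub>C y) = a *\<^sub>C (x * y)"

definition invertible_el :: "'a::complex_banach_algebra_1 \<Rightarrow> bool" where
  "invertible_el u \<longleftrightarrow> (\<exists>v. v * u = 1 \<and> u * v = 1)"

definition inv_el :: "'a::complex_banach_algebra_1 \<Rightarrow> 'a" where
  "inv_el u = (THE v. v * u = 1 \<and> u * v = 1)"

definition spectrum :: "'a::complex_banach_algebra_1 \<Rightarrow> complex set" where
  "spectrum x = {c. \<not> invertible_el (x - c *\<^sub>C 1)}"

definition q_hull :: "complex \<Rightarrow> complex set \<Rightarrow> complex set" where
  "q_hull q S = {0} \<union> (\<Union>n::nat. (\<lambda>s. q ^ n * s) ` S)"

definition poly_el :: "complex poly \<Rightarrow> 'a::complex_banach_algebra_1 \<Rightarrow> 'a" where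
  "poly_el p x = (\<Sum>i\<le>degree p. coeff p i *\<^sub>C x ^ i)"

definition rat_el :: "complex poly \<Rightarrow> complex poly \<Rightarrow> 'a::complex_banach_algebra_1 \<Rightarrow> 'a" where
  "rat_el p d x = poly_el p x * inv_el (poly_el d x)"

end

theory Submission
  imports Defs "HOL-Computational_Algebra.Fundamental_Theorem_Algebra"
begin

text \<open>Write \<open>X t = q^t x\<close>. The relation \<open>xy = q\<^sup>-\<^sup>1 yx\<close> gives \<open>y r(X t) = r(X (t+1)) y\<close> for every
  rational \<open>r\<close> without poles on \<open>\<sigma>(x)\<close>, because \<open>\<sigma>(X t) \<subseteq> \<sigma>(x)\<^sub>q = \<sigma>(x)\<close>. Moving every power of
  \<open>y\<close> to the right, \<open>f^n\<close> becomes a sum of \<open>N^n\<close> words, each a product of \<open>n\<close> coefficients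
  \<open>r\<^sub>k(X t)\<close> followed by a power of \<open>y\<close>, where the coefficient in position \<open>j = 0, 1, \<dots>\<close> is taken at a time \<open>t \<ge> j\<close>.
  Since \<open>q^t \<rightarrow> 0\<close> and \<open>r\<^sub>k(0) = 0\<close>, we have \<open>r\<^sub>k(X t) \<rightarrow> 0\<close>, hence
  \<open>\<parallel>f^n\<parallel> \<le> K^n E\<^sub>0 \<cdots> E\<^sub>n\<^sub>-\<^sub>1\<close> with \<open>E\<^sub>j \<rightarrow> 0\<close>, and the spectral radius of \<open>f\<close> vanishes.\<close>

context complex_banach_algebra_1 begin

lemma scaleC_zero_left [simp]: "0 *\<^sub>C x = 0"
  using scaleC_add_left[of 0 0 x] by simp

lemma scaleC_zero_right [simp]: "a *\<^sub>C 0 = 0"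
  using scaleC_add_right[of a 0 0] by simp

lemma scaleC_minus_left: "(- a) *\<^sub>C x = - (a *\<^sub>C x)"
  using scaleC_add_left[of "-a" a x] by (simp add: eq_neg_iff_add_eq_0)

lemma scaleC_minus_right: "a *\<^sub>C (- x) = - (a *\<^sub>C x)"
  using scaleC_add_right[of a "-x" x] by (simp add: eq_neg_iff_add_eq_0)

lemma scaleC_diff_right: "a *\<^sub>C (x - y) = a *\<^sub>C x - a *\<^sub>C y"
  using scaleC_add_right[of a x "-y"] by (simp add: scaleC_minus_right)

lemma scaleC_diff_left: "(a - b) *\<^sub>C x = a *\<^sub>C x - b *\<^sub>C x"
  using scaleC_add_left[of a "-b" x] by (simp add: scaleC_minus_left)

lemma scaleC_sum_right: "a *\<^sub>C (\<Sum>i\<in>S. f i) = (\<Sum>i\<in>S. a *\<^sub>C f i)"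
  by (induction S rule: infinite_finite_induct) (auto simp: scaleC_add_right)

lemma scaleC_power: "(c *\<^sub>C x) ^ n = (c ^ n) *\<^sub>C (x ^ n)"
  by (induction n) (auto simp: scaleC_one mult_scaleC_left mult_scaleC_right scaleC_scaleC mult.commute)

end

lemma invertible_elI: "v * u = 1 \<Longrightarrow> u * v = 1 \<Longrightarrow> invertible_el u"
  unfolding invertible_el_def by blast

lemma inv_el:
  assumes "invertible_el u"
  shows "inv_el u * u = 1" "u * inv_el u = 1"
proof -
  obtain v where v: "v * u = 1" "u * v = 1"
    using assms unfolding invertible_el_def by blast
  have "w = v" if "w * u = 1" for w
    by (metis that v(2) mult.assoc mult_1_left mult_1_right)
  then have "inv_el u = v"
    unfolding inv_el_def using v by blast
  then show "inv_el u * u = 1" "u * inv_el u = 1"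
    using v by auto
qed

lemma invertible_mult:
  assumes "invertible_el u" "invertible_el w"
  shows "invertible_el (u * w)"
proof (rule invertible_elI[of "inv_el w * inv_el u"])
  show "inv_el w * inv_el u * (u * w) = 1"
    by (metis assms inv_el(1) mult.assoc mult_1_left)
  show "u * w * (inv_el w * inv_el u) = 1"
    by (metis assms inv_el(2) mult.assoc mult_1_left)
qed

lemma invertible_scaleC:
  assumes "invertible_el u" "c \<noteq> 0"
  shows "invertible_el (c *\<^sub>C u)"
proof (rule invertible_elI[of "inverse c *\<^sub>C inv_el u"])
  show "inverse c *\<^sub>C inv_el u * c *\<^sub>C u = 1" "c *\<^sub>C u * (inverse c *\<^sub>C inv_el u) = 1"
    using assms inv_el[OF assms(1)]
    by (simp_all add: mult_scaleC_left mult_scaleC_right scaleC_scaleC scaleC_one)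
qed

lemma invertible_scaleC_one: "c \<noteq> 0 \<Longrightarrow> invertible_el (c *\<^sub>C (1::'a::complex_banach_algebra_1))"
  using invertible_scaleC[of 1 c] invertible_elI[of 1 1] by simp

lemma inv_el_twisted_commute:
  assumes "y * u = v * y" "invertible_el u" "invertible_el v"
  shows "y * inv_el u = inv_el v * y"
proof -
  have "inv_el v * y = inv_el v * y * (u * inv_el u)"
    using inv_el[OF assms(2)] by simp
  also have "\<dots> = inv_el v * (y * u) * inv_el u"
    by (simp add: mult.assoc)
  also have "\<dots> = (inv_el v * v) * y * inv_el u"
    by (simp add: assms(1) mult.assoc)
  finally show ?thesis
    using inv_el[OF assms(3)] by simp
qed

lemma eventually_norm_inv_el_le:
  fixes u :: "nat \<Rightarrow> 'a::complex_banach_algebra_1"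
  assumes lim: "u \<longlonglongrightarrow> d *\<^sub>C 1" and d: "d \<noteq> 0" and inv: "\<And>t. invertible_el (u t)"
  shows "eventually (\<lambda>t. norm (inv_el (u t)) \<le> 2 / cmod d) sequentially"
proof -
  have "eventually (\<lambda>t. dist (u t) (d *\<^sub>C 1) < cmod d / 2) sequentially"
    using lim d by (intro tendstoD) auto
  then show ?thesis
  proof eventually_elim
    case (elim t)
    define v where "v = inv_el (u t)"
    have "d *\<^sub>C v = v * (u t + (d *\<^sub>C 1 - u t))"
      by (simp add: mult_scaleC_right)
    also have "\<dots> = 1 + v * (d *\<^sub>C 1 - u t)"
      unfolding distrib_left v_def inv_el(1)[OF inv] ..
    finally have "cmod d * norm v \<le> 1 + norm v * norm (d *\<^sub>C 1 - u t)"
      by (metis norm_scaleC norm_one norm_mult_ineq norm_triangle_le add_left_mono)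
    also have "\<dots> \<le> 1 + norm v * (cmod d / 2)"
      using elim by (intro add_left_mono mult_left_mono) (auto simp: dist_norm norm_minus_commute)
    finally show ?case
      using d by (simp add: v_def field_simps)
  qed
qed

lemma poly_el_eq_sum_lessThan:
  assumes "degree p < n"
  shows "poly_el p z = (\<Sum>i<n. coeff p i *\<^sub>C z ^ i)"
  unfolding poly_el_def
  by (rule sum.mono_neutral_left) (use assms in \<open>auto simp: coeff_eq_0\<close>)

lemma poly_el_0 [simp]: "poly_el 0 z = 0"
  unfolding poly_el_def by simp

lemma poly_el_add: "poly_el (p + q) z = poly_el p z + poly_el q z"
proof -
  define n where "n = Suc (max (degree p) (degree q))"
  have "degree (p + q) < n" "degree p < n" "degree q < n"
    using degree_add_le[of p "max (degree p) (degree q)" q] unfolding n_def by auto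
  then show ?thesis
    by (simp add: poly_el_eq_sum_lessThan[of _ n] scaleC_add_left sum.distrib)
qed

lemma poly_el_smult: "poly_el (smult a p) z = a *\<^sub>C poly_el p z"
proof -
  have "degree (smult a p) < Suc (degree p)"
    using degree_smult_le[of a p] by simp
  then have "poly_el (smult a p) z = (\<Sum>i<Suc (degree p). coeff (smult a p) i *\<^sub>C z ^ i)"
    by (rule poly_el_eq_sum_lessThan)
  also have "\<dots> = a *\<^sub>C (\<Sum>i<Suc (degree p). coeff p i *\<^sub>C z ^ i)"
    by (simp only: scaleC_sum_right coeff_smult scaleC_scaleC)
  also have "(\<Sum>i<Suc (degree p). coeff p i *\<^sub>C z ^ i) = poly_el p z"
    by (rule poly_el_eq_sum_lessThan[symmetric]) simp
  finally show ?thesis .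
qed

lemma poly_el_pCons: "poly_el (pCons a p) z = a *\<^sub>C 1 + z * poly_el p z"
proof -
  have "poly_el (pCons a p) z = (\<Sum>i<Suc (Suc (degree p)). coeff (pCons a p) i *\<^sub>C z ^ i)"
    by (rule poly_el_eq_sum_lessThan) simp
  also have "\<dots> = a *\<^sub>C 1 + z * (\<Sum>i<Suc (degree p). coeff p i *\<^sub>C z ^ i)"
    by (subst sum.lessThan_Suc_shift)
      (simp add: sum_distrib_left mult_scaleC_right del: sum.lessThan_Suc)
  also have "(\<Sum>i<Suc (degree p). coeff p i *\<^sub>C z ^ i) = poly_el p z"
    by (rule poly_el_eq_sum_lessThan[symmetric]) simp
  finally show ?thesis .
qed

lemma poly_el_mult: "poly_el (p * q) z = poly_el p z * poly_el q z"
  by (induction p)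
    (simp_all add: poly_el_add poly_el_smult poly_el_pCons distrib_right mult_scaleC_left mult.assoc)

lemma poly_el_zero_el: "poly_el p (0::'a::complex_banach_algebra_1) = poly p 0 *\<^sub>C 1"
  by (induction p) (simp_all add: poly_el_pCons)

lemma poly_el_twisted_commute:
  fixes y u v :: "'a::complex_banach_algebra_1"
  assumes "y * u = v * y"
  shows "y * poly_el p u = poly_el p v * y"
proof (induction p)
  case (pCons a p)
  have "y * poly_el (pCons a p) u = a *\<^sub>C y + v * (y * poly_el p u)"
    by (simp add: poly_el_pCons distrib_left mult_scaleC_right assms flip: mult.assoc)
  also have "\<dots> = poly_el (pCons a p) v * y"
    by (simp add: pCons.IH poly_el_pCons distrib_right mult_scaleC_left mult.assoc)
  finally show ?case .
qed simp

lemma rat_el_twisted_commute: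
  assumes "y * u = v * y" "invertible_el (poly_el D u)" "invertible_el (poly_el D v)"
  shows "y * rat_el P D u = rat_el P D v * y"
proof -
  have "y * rat_el P D u = poly_el P v * (y * inv_el (poly_el D u))"
    unfolding rat_el_def by (simp add: poly_el_twisted_commute[OF assms(1)] flip: mult.assoc)
  also have "\<dots> = rat_el P D v * y"
    unfolding rat_el_def
    by (simp add: inv_el_twisted_commute[OF poly_el_twisted_commute[OF assms(1)] assms(2,3)] mult.assoc)
  finally show ?thesis .
qed

lemma tendsto_scaleC_left:
  fixes v :: "'a::complex_banach_algebra_1"
  assumes "(g \<longlongrightarrow> l) F"
  shows "((\<lambda>t. g t *\<^sub>C v) \<longlongrightarrow> l *\<^sub>C v) F"
proof (rule LIM_zero_cancel, rule Lim_null_comparison)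
  show "\<forall>\<^sub>F t in F. norm (g t *\<^sub>C v - l *\<^sub>C v) \<le> cmod (g t - l) * norm v"
    by (simp add: norm_scaleC flip: scaleC_diff_left)
  show "((\<lambda>t. cmod (g t - l) * norm v) \<longlongrightarrow> 0) F"
    using assms by (intro tendsto_mult_left_zero tendsto_norm_zero LIM_zero)
qed

lemma tendsto_poly_el_scaleC:
  fixes z :: "'a::complex_banach_algebra_1"
  assumes "(g \<longlongrightarrow> l) F"
  shows "((\<lambda>t. poly_el p (g t *\<^sub>C z)) \<longlongrightarrow> poly_el p (l *\<^sub>C z)) F"
  unfolding poly_el_def scaleC_power scaleC_scaleC
  by (intro tendsto_sum tendsto_scaleC_left tendsto_mult tendsto_const tendsto_power assms)

text \<open>One half of the spectral mapping theorem: split off the linear factors of \<open>D\<close>.\<close>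

lemma invertible_poly_el:
  fixes z :: "'a::complex_banach_algebra_1"
  assumes "D \<noteq> 0" "\<forall>c\<in>spectrum z. poly D c \<noteq> 0"
  shows "invertible_el (poly_el D z)"
  using assms
proof (induction "degree D" arbitrary: D rule: less_induct)
  case less
  show ?case
  proof (cases "degree D = 0")
    case True
    then obtain d where "D = [:d:]" "d \<noteq> 0"
      using less.prems(1) by (metis degree_eq_zeroE pCons_0_0)
    then show ?thesis
      by (simp add: poly_el_pCons invertible_scaleC_one)
  next
    case False
    then obtain a where a: "poly D a = 0"
      using fundamental_theorem_of_algebra constant_degree by metis
    then obtain Q where Q: "D = [:-a, 1:] * Q"
      using poly_eq_0_iff_dvd by blast
    with less.prems(1) have Q0: "Q \<noteq> 0"
      by auto
    have "invertible_el (poly_el Q z)"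
    proof (rule less.hyps[OF _ Q0])
      show "degree Q < degree D"
        unfolding Q using Q0 by (subst degree_mult_eq) auto
      show "\<forall>c\<in>spectrum z. poly Q c \<noteq> 0"
        using less.prems(2) by (simp add: Q)
    qed
    moreover have "invertible_el (z - a *\<^sub>C 1)"
      using less.prems(2) a unfolding spectrum_def by blast
    moreover have "poly_el [:-a, 1:] z = z - a *\<^sub>C 1"
      by (simp add: poly_el_pCons scaleC_minus_left scaleC_one)
    ultimately show ?thesis
      unfolding Q poly_el_mult by (simp add: invertible_mult)
  qed
qed

lemma rat_el_scaleC_tendsto_0:
  fixes z :: "'a::complex_banach_algebra_1"
  assumes g: "g \<longlonglongrightarrow> 0" and P0: "poly P 0 = 0" and D0: "poly D 0 \<noteq> 0"
    and inv: "\<And>t. invertible_el (poly_el D (g t *\<^sub>C z))"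
  shows "(\<lambda>t. rat_el P D (g t *\<^sub>C z)) \<longlonglongrightarrow> 0"
proof (rule Lim_null_comparison)
  define B where "B = 2 / cmod (poly D 0)"
  have "(\<lambda>t. poly_el D (g t *\<^sub>C z)) \<longlonglongrightarrow> poly D 0 *\<^sub>C 1"
    using tendsto_poly_el_scaleC[OF g, of D z] by (simp add: poly_el_zero_el)
  then have "eventually (\<lambda>t. norm (inv_el (poly_el D (g t *\<^sub>C z))) \<le> B) sequentially"
    unfolding B_def using D0 inv by (rule eventually_norm_inv_el_le)
  then show "eventually (\<lambda>t. norm (rat_el P D (g t *\<^sub>C z)) \<le> norm (poly_el P (g t *\<^sub>C z)) * B) sequentially"
    unfolding rat_el_def
    by eventually_elim (metis norm_mult_ineq mult_left_mono norm_ge_zero order_trans)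
  have "(\<lambda>t. poly_el P (g t *\<^sub>C z)) \<longlonglongrightarrow> 0"
    using tendsto_poly_el_scaleC[OF g, of P z] by (simp add: poly_el_zero_el P0)
  then show "(\<lambda>t. norm (poly_el P (g t *\<^sub>C z)) * B) \<longlonglongrightarrow> 0"
    by (intro tendsto_mult_left_zero tendsto_norm_zero)
qed

subsection \<open>A criterion for quasinilpotency\<close>

lemma invertible_one_minus_if_summable:
  fixes z :: "'a::complex_banach_algebra_1"
  assumes "summable (\<lambda>n. norm (z ^ n))"
  shows "invertible_el (1 - z)"
proof -
  have sz: "summable (\<lambda>n. z ^ n)"
    using assms by (rule summable_norm_cancel)
  then have tel: "(\<lambda>n. z ^ n - z ^ Suc n) sums 1"
    using telescope_sums'[OF summable_LIMSEQ_zero[OF sz]] by simp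
  define s where "s = (\<Sum>n. z ^ n)"
  have "s * (1 - z) = (\<Sum>n. z ^ n - z ^ Suc n)"
    unfolding s_def suminf_mult2[OF sz] by (simp add: right_diff_distrib power_commutes)
  moreover have "(1 - z) * s = (\<Sum>n. z ^ n - z ^ Suc n)"
    unfolding s_def suminf_mult[OF sz, symmetric] by (simp add: left_diff_distrib)
  ultimately show ?thesis
    using sums_unique[OF tel] by (metis invertible_elI)
qed

text \<open>If \<open>\<Sum> \<parallel>f\<^sup>n\<parallel> r\<^sup>n\<close> converges for every \<open>r\<close>, the Neumann series of \<open>f / c\<close> converges for
  every \<open>c \<noteq> 0\<close>, while \<open>\<parallel>f\<^sup>n\<parallel> \<parallel>f\<^sup>-\<^sup>1\<parallel>\<^sup>n \<ge> 1\<close> would rule out an inverse of \<open>f\<close>.\<close>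

lemma spectrum_eq_0_if_summable_powers:
  fixes f :: "'a::complex_banach_algebra_1"
  assumes summable: "\<And>r. r > 0 \<Longrightarrow> summable (\<lambda>n. norm (f ^ n) * r ^ n)"
  shows "spectrum f = {0}"
proof -
  have "\<not> invertible_el f"
  proof
    assume inv: "invertible_el f"
    define g where "g = inv_el f"
    have fg: "f * g = 1"
      using inv_el[OF inv] unfolding g_def by simp
    have pow: "f ^ n * g ^ n = 1" for n
    proof (induction n)
      case (Suc n)
      have "f ^ Suc n * g ^ Suc n = f * (f ^ n * g ^ n) * g"
        by (simp add: power_Suc2 mult.assoc power_commutes)
      then show ?case
        using Suc fg by simp
    qed simp
    define r where "r = norm g + 1"
    have "(\<lambda>n. norm (f ^ n) * r ^ n) \<longlonglongrightarrow> 0"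
      using summable unfolding r_def by (intro summable_LIMSEQ_zero) (simp add: add_nonneg_pos)
    then have "eventually (\<lambda>n. norm (f ^ n) * r ^ n < 1) sequentially"
      by (rule order_tendstoD) simp
    then obtain n where n: "norm (f ^ n) * r ^ n < 1"
      by (auto simp: eventually_sequentially)
    have "1 = norm (f ^ n * g ^ n)"
      using pow by simp
    also have "\<dots> \<le> norm (f ^ n) * norm (g ^ n)"
      by (rule norm_mult_ineq)
    also have "\<dots> \<le> norm (f ^ n) * r ^ n"
    proof (rule mult_left_mono)
      have "norm (g ^ n) \<le> norm g ^ n"
        by (rule norm_power_ineq)
      also have "\<dots> \<le> r ^ n"
        unfolding r_def by (intro power_mono) auto
      finally show "norm (g ^ n) \<le> r ^ n" .
    qed simp
    finally show False
      using n by simp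
  qed
  moreover have "invertible_el (f - c *\<^sub>C 1)" if c: "c \<noteq> 0" for c
  proof -
    define z where "z = inverse c *\<^sub>C f"
    have "norm (z ^ n) = norm (f ^ n) * inverse (cmod c) ^ n" for n
      unfolding z_def by (simp add: scaleC_power norm_scaleC norm_power norm_inverse mult.commute)
    then have "invertible_el (1 - z)"
      using c summable[of "inverse (cmod c)"] by (intro invertible_one_minus_if_summable) simp
    then have "invertible_el ((- c) *\<^sub>C (1 - z))"
      using c by (intro invertible_scaleC) auto
    moreover have "(- c) *\<^sub>C (1 - z) = f - c *\<^sub>C 1"
      unfolding z_def using c by (simp add: scaleC_diff_right scaleC_minus_left scaleC_scaleC scaleC_one)
    ultimately show ?thesis
      by simp
  qed
  ultimately show ?thesis
    unfolding spectrum_def by auto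
qed

lemma summable_prod_if_tendsto_0:
  fixes w :: "nat \<Rightarrow> real"
  assumes "\<And>j. 0 \<le> w j" "w \<longlonglongrightarrow> 0"
  shows "summable (\<lambda>n. \<Prod>j<n. w j)"
proof -
  obtain M where M: "\<And>n. n \<ge> M \<Longrightarrow> w n < 1/2"
    using order_tendstoD(2)[OF assms(2), of "1/2"] by (auto simp: eventually_sequentially)
  show ?thesis
  proof (rule summable_ratio_test[of "1/2" M])
    fix n assume "n \<ge> M"
    then have "(\<Prod>j<n. w j) * w n \<le> (\<Prod>j<n. w j) * (1/2)"
      using M[of n] assms(1) by (intro mult_left_mono) (auto simp: prod_nonneg)
    then show "norm (\<Prod>j<Suc n. w j) \<le> 1/2 * norm (\<Prod>j<n. w j)"
      using assms(1) by (simp add: prod_nonneg mult.commute)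
  qed simp
qed

lemma summable_powers_if_norm_power_le:
  fixes f :: "'a::real_normed_algebra_1"
  assumes bound: "\<And>n. norm (f ^ n) \<le> K ^ n * (\<Prod>j<n. E j)"
    and K: "0 \<le> K" and E: "\<And>j. 0 \<le> E j" "E \<longlonglongrightarrow> 0" and r: "0 < r"
  shows "summable (\<lambda>n. norm (f ^ n) * r ^ n)"
proof (rule summable_comparison_test)
  show "summable (\<lambda>n. \<Prod>j<n. K * r * E j)"
    using K r E tendsto_mult_right_zero[OF E(2), of "K * r"] by (intro summable_prod_if_tendsto_0) auto
  show "\<exists>N. \<forall>n\<ge>N. norm (norm (f ^ n) * r ^ n) \<le> (\<Prod>j<n. K * r * E j)"
  proof (intro exI allI impI)
    fix n :: nat
    have "norm (norm (f ^ n) * r ^ n) = norm (f ^ n) * r ^ n"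
      using r by simp
    also have "\<dots> \<le> K ^ n * (\<Prod>j<n. E j) * r ^ n"
      using r by (intro mult_right_mono bound) simp
    also have "\<dots> = (\<Prod>j<n. K * r * E j)"
      by (simp add: prod.distrib power_mult_distrib)
    finally show "norm (norm (f ^ n) * r ^ n) \<le> (\<Prod>j<n. K * r * E j)" .
  qed
qed

subsection \<open>Powers of twisted polynomials\<close>

text \<open>For \<open>f = \<Sum>\<^sub>k a\<^sub>k(0) y\<^sup>k\<close> with \<open>y a\<^sub>k(t) = a\<^sub>k(t+1) y\<close>, the word \<open>k\<^sub>1\<dots>k\<^sub>n\<close> contributes
  \<open>word_coeff a 0 [k\<^sub>1,\<dots>,k\<^sub>n] y\<^bsup>k\<^sub>1+\<dots>+k\<^sub>n\<^esup>\<close> to \<open>f\<^sup>n\<close>: every \<open>y\<^sup>k\<close> is moved to the right,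
  shifting the time index of the coefficients it passes.\<close>

fun word_coeff :: "(nat \<Rightarrow> nat \<Rightarrow> 'a::monoid_mult) \<Rightarrow> nat \<Rightarrow> nat list \<Rightarrow> 'a" where
  "word_coeff a t [] = 1"
| "word_coeff a t (k # w) = a k t * word_coeff a (t + k) w"

lemma power_mult_shift:
  fixes y :: "'a::monoid_mult"
  assumes "\<And>t. y * b t = b (Suc t) * y"
  shows "y ^ e * b t = b (t + e) * y ^ e"
proof (induction e arbitrary: t)
  case (Suc e)
  have "y ^ Suc e * b t = y ^ e * (y * b t)"
    by (simp only: power_Suc2 mult.assoc)
  also have "\<dots> = y ^ e * b (Suc t) * y"
    by (simp add: assms mult.assoc)
  also have "\<dots> = b (t + Suc e) * y ^ Suc e"
    by (simp add: Suc.IH mult.assoc power_commutes)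
  finally show ?case .
qed simp

lemma word_coeff_shift:
  assumes "\<And>k t. k \<in> A \<Longrightarrow> y * a k t = a k (Suc t) * y" and "set w \<subseteq> A"
  shows "y * word_coeff a t w = word_coeff a (Suc t) w * y"
  using assms(2)
proof (induction w arbitrary: t)
  case (Cons k w)
  have "y * word_coeff a t (k # w) = (y * a k t) * word_coeff a (t + k) w"
    by (simp add: mult.assoc)
  also have "\<dots> = a k (Suc t) * (y * word_coeff a (t + k) w)"
    using Cons.prems by (simp add: assms(1) mult.assoc)
  also have "\<dots> = a k (Suc t) * (word_coeff a (Suc (t + k)) w * y)"
    using Cons by simp
  also have "\<dots> = word_coeff a (Suc t) (k # w) * y"
    by (simp add: mult.assoc)
  finally show ?case .
qed simp

lemma power_sum_twisted_eq_sum_words: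
  fixes a :: "nat \<Rightarrow> nat \<Rightarrow> 'a::semiring_1"
  assumes comm: "\<And>k t. k \<in> A \<Longrightarrow> y * a k t = a k (Suc t) * y" and "finite A"
  shows "(\<Sum>k\<in>A. a k 0 * y ^ k) ^ n
    = (\<Sum>w\<in>{w. set w \<subseteq> A \<and> length w = n}. word_coeff a 0 w * y ^ sum_list w)"
proof (induction n)
  case 0
  have "{w. set w \<subseteq> A \<and> length w = 0} = {[]}"
    by auto
  then show ?case
    by simp
next
  case (Suc n)
  let ?W = "\<lambda>n. {w. set w \<subseteq> A \<and> length w = n}"
  let ?g = "\<lambda>w. word_coeff a 0 w * y ^ sum_list w"
  have "(\<Sum>k\<in>A. a k 0 * y ^ k) ^ Suc n
      = (\<Sum>w\<in>?W n. \<Sum>k\<in>A. a k 0 * (y ^ k * word_coeff a 0 w) * y ^ sum_list w)"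
    by (simp add: Suc.IH sum_distrib_left sum_distrib_right mult.assoc)
  also have "\<dots> = (\<Sum>w\<in>?W n. \<Sum>k\<in>A. ?g (k # w))"
  proof (intro sum.cong refl)
    fix w k
    assume "w \<in> ?W n"
    then have "\<And>t. y * word_coeff a t w = word_coeff a (Suc t) w * y"
      using word_coeff_shift[of A y a, OF comm] by simp
    then have "y ^ k * word_coeff a 0 w = word_coeff a (0 + k) w * y ^ k"
      by (rule power_mult_shift)
    then show "a k 0 * (y ^ k * word_coeff a 0 w) * y ^ sum_list w = ?g (k # w)"
      by (simp add: power_add mult.assoc)
  qed
  also have "\<dots> = (\<Sum>(w, k)\<in>?W n \<times> A. ?g (k # w))"
    by (rule sum.cartesian_product)
  also have "\<dots> = (\<Sum>w\<in>?W (Suc n). ?g w)"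
    unfolding lists_length_Suc_eq sum.reindex[OF inj_split_Cons] by (intro sum.cong) auto
  finally show ?case .
qed

lemma norm_word_coeff_le:
  fixes a :: "nat \<Rightarrow> nat \<Rightarrow> 'a::real_normed_algebra_1"
  assumes bound: "\<And>k j s. k \<in> A \<Longrightarrow> j \<le> s \<Longrightarrow> norm (a k s) \<le> E j" and E: "\<And>j. 0 \<le> E j"
    and "0 \<notin> A" "set w \<subseteq> A" "t \<le> s"
  shows "norm (word_coeff a s w) \<le> (\<Prod>i<length w. E (t + i))"
  using assms(4,5)
proof (induction w arbitrary: s t)
  case (Cons k w)
  then have "Suc t \<le> s + k"
    using \<open>0 \<notin> A\<close> by (cases k) auto
  have "norm (word_coeff a s (k # w)) \<le> norm (a k s) * norm (word_coeff a (s + k) w)"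
    by (simp add: norm_mult_ineq)
  also have "\<dots> \<le> E t * (\<Prod>i<length w. E (Suc t + i))"
  proof (intro mult_mono)
    show "norm (a k s) \<le> E t"
      using Cons by (intro bound) auto
    show "norm (word_coeff a (s + k) w) \<le> (\<Prod>i<length w. E (Suc t + i))"
      using Cons.IH[of "Suc t" "s + k"] Cons.prems \<open>Suc t \<le> s + k\<close> by simp
  qed (use E in \<open>auto simp: prod_nonneg\<close>)
  also have "\<dots> = (\<Prod>i<length (k # w). E (t + i))"
    by (simp add: prod.lessThan_Suc_shift del: prod.lessThan_Suc)
  finally show ?case .
qed simp

lemma norm_power_sum_twisted_le:
  fixes a :: "nat \<Rightarrow> nat \<Rightarrow> 'a::real_normed_algebra_1"
  assumes comm: "\<And>k t. k \<in> {1..N} \<Longrightarrow> y * a k t = a k (Suc t) * y"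
    and bound: "\<And>k j s. k \<in> {1..N} \<Longrightarrow> j \<le> s \<Longrightarrow> norm (a k s) \<le> E j" and E: "\<And>j. 0 \<le> E j"
  shows "norm ((\<Sum>k=1..N. a k 0 * y ^ k) ^ n) \<le> (real N * max 1 (norm y) ^ N) ^ n * (\<Prod>j<n. E j)"
proof -
  define Y where "Y = max 1 (norm y)"
  let ?W = "{w. set w \<subseteq> {1..N} \<and> length w = n}"
  have word_bound: "norm (word_coeff a 0 w * y ^ sum_list w) \<le> (\<Prod>j<n. E j) * Y ^ (n * N)"
    if w: "w \<in> ?W" for w
  proof -
    have "set w \<subseteq> {1..N}"
      using w by simp
    then have "sum_list w \<le> length w * N"
      by (induction w) auto
    have Y: "1 \<le> Y" "norm y \<le> Y"
      unfolding Y_def by simp_all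
    have "norm (y ^ sum_list w) \<le> norm y ^ sum_list w"
      by (rule norm_power_ineq)
    also have "\<dots> \<le> Y ^ sum_list w"
      using Y by (intro power_mono) simp_all
    also have "\<dots> \<le> Y ^ (n * N)"
      using Y \<open>sum_list w \<le> length w * N\<close> w by (intro power_increasing) simp_all
    finally have ypow: "norm (y ^ sum_list w) \<le> Y ^ (n * N)" .
    have "norm (word_coeff a 0 w) \<le> (\<Prod>i<length w. E (0 + i))"
      by (rule norm_word_coeff_le[where A = "{1..N}"]) (use bound E w in auto)
    with w ypow have "norm (word_coeff a 0 w) * norm (y ^ sum_list w) \<le> (\<Prod>j<n. E j) * Y ^ (n * N)"
      using E by (intro mult_mono) (simp_all add: prod_nonneg)
    then show ?thesis
      by (rule order_trans[OF norm_mult_ineq])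
  qed
  have "(\<Sum>k=1..N. a k 0 * y ^ k) ^ n = (\<Sum>w\<in>?W. word_coeff a 0 w * y ^ sum_list w)"
    by (rule power_sum_twisted_eq_sum_words) (use comm in auto)
  then have "norm ((\<Sum>k=1..N. a k 0 * y ^ k) ^ n) \<le> (\<Sum>w\<in>?W. norm (word_coeff a 0 w * y ^ sum_list w))"
    by (simp only: norm_sum)
  also have "\<dots> \<le> real (card ?W) * ((\<Prod>j<n. E j) * Y ^ (n * N))"
    by (rule sum_bounded_above) (rule word_bound)
  also have "\<dots> = (real N * Y ^ N) ^ n * (\<Prod>j<n. E j)"
    by (simp add: card_lists_length_eq power_mult_distrib power_mult[symmetric] mult_ac)
  finally show ?thesis
    unfolding Y_def .
qed

lemma tendsto_0_tail_sup_majorant: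
  fixes A :: "nat \<Rightarrow> real"
  assumes nonneg: "\<And>t. 0 \<le> A t" and lim: "A \<longlonglongrightarrow> 0"
  obtains E where "E \<longlonglongrightarrow> 0" "\<And>j. 0 \<le> E j" "\<And>j t. j \<le> t \<Longrightarrow> A t \<le> E j"
proof
  define E where "E j = Sup (A ` {j..})" for j
  have "bdd_above (range A)"
    using lim by (intro Bseq_bdd_above convergent_imp_Bseq) (auto simp: convergent_def)
  then have bdd: "bdd_above (A ` {j..})" for j
    by (rule bdd_above_mono) auto
  show le: "A t \<le> E j" if "j \<le> t" for j t
    unfolding E_def by (rule cSup_upper) (use that bdd in auto)
  show nonneg_E: "0 \<le> E j" for j
    using le[of j j] nonneg[of j] by simp
  show "E \<longlonglongrightarrow> 0"
  proof (rule LIMSEQ_I)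
    fix r :: real
    assume "0 < r"
    then obtain M where M: "\<And>t. t \<ge> M \<Longrightarrow> A t < r / 2"
      using order_tendstoD(2)[OF lim, of "r / 2"] by (auto simp: eventually_sequentially)
    have "norm (E n - 0) < r" if "n \<ge> M" for n
    proof -
      have "E n \<le> r / 2"
        unfolding E_def by (rule cSup_least) (use M that in \<open>auto intro: less_imp_le\<close>)
      then show ?thesis
        using nonneg_E[of n] \<open>0 < r\<close> by simp
    qed
    then show "\<exists>M. \<forall>n\<ge>M. norm (E n - 0) < r"
      by blast
  qed
qed

theorem spectrum_sum_twisted_eq_0:
  fixes a :: "nat \<Rightarrow> nat \<Rightarrow> 'a::complex_banach_algebra_1"
  assumes comm: "\<And>k t. k \<in> {1..N} \<Longrightarrow> y * a k t = a k (Suc t) * y"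
    and lim: "\<And>k. k \<in> {1..N} \<Longrightarrow> a k \<longlonglongrightarrow> 0"
  shows "spectrum (\<Sum>k=1..N. a k 0 * y ^ k) = {0}"
proof -
  define A where "A t = (\<Sum>k=1..N. norm (a k t))" for t
  have "A \<longlonglongrightarrow> (\<Sum>k=1..N. 0)"
    unfolding A_def using lim by (intro tendsto_sum tendsto_norm_zero)
  then obtain E where E: "E \<longlonglongrightarrow> 0" "\<And>j. 0 \<le> E j" and AE: "\<And>j t. j \<le> t \<Longrightarrow> A t \<le> E j"
    using tendsto_0_tail_sup_majorant[of A] unfolding A_def by (auto simp: sum_nonneg)
  have bound: "norm (a k s) \<le> E j" if "k \<in> {1..N}" "j \<le> s" for k j s
    using member_le_sum[of k "{1..N}" "\<lambda>k. norm (a k s)"] AE[OF that(2)] that(1)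
    unfolding A_def by simp
  have pow_bound: "norm ((\<Sum>k=1..N. a k 0 * y ^ k) ^ n)
      \<le> (real N * max 1 (norm y) ^ N) ^ n * (\<Prod>j<n. E j)" for n
    by (rule norm_power_sum_twisted_le[of N y a E]) (simp_all add: comm bound E(2))
  show ?thesis
  proof (rule spectrum_eq_0_if_summable_powers)
    fix r :: real
    assume "0 < r"
    show "summable (\<lambda>n. norm ((\<Sum>k=1..N. a k 0 * y ^ k) ^ n) * r ^ n)"
      by (rule summable_powers_if_norm_power_le[OF pow_bound _ E(2) E(1) \<open>0 < r\<close>]) simp
  qed
qed

lemma spectrum_scaleC_subset:
  fixes z :: "'a::complex_banach_algebra_1"
  assumes "c \<noteq> 0"
  shows "spectrum (c *\<^sub>C z) \<subseteq> (\<lambda>s. c * s) ` spectrum z"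
proof
  fix \<mu>
  assume \<mu>: "\<mu> \<in> spectrum (c *\<^sub>C z)"
  have "\<mu> / c \<in> spectrum z"
  proof (rule ccontr)
    assume "\<mu> / c \<notin> spectrum z"
    then have "invertible_el (c *\<^sub>C (z - (\<mu> / c) *\<^sub>C 1))"
      using assms unfolding spectrum_def by (simp add: invertible_scaleC)
    with \<mu> show False
      using assms unfolding spectrum_def by (simp add: scaleC_diff_right scaleC_scaleC)
  qed
  then show "\<mu> \<in> (\<lambda>s. c * s) ` spectrum z"
    using assms by (intro image_eqI[of _ _ "\<mu> / c"]) simp_all
qed

theorem lemma3p4:
  fixes x y :: "'a::complex_banach_algebra_1" and q :: complex
    and N :: nat and P D :: "nat \<Rightarrow> complex poly"
  assumes "0 < cmod q" and "cmod q < 1"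
    and "x * y = inverse q *\<^sub>C (y * x)"
    and "q_hull q (spectrum x) = spectrum x"
    and "\<And>k. 1 \<le> k \<Longrightarrow> k \<le> N \<Longrightarrow> (\<forall>c\<in>spectrum x. poly (D k) c \<noteq> 0)"
    and "\<And>k. 1 \<le> k \<Longrightarrow> k \<le> N \<Longrightarrow> poly (P k) 0 / poly (D k) 0 = 0"
  shows "spectrum (\<Sum>k=1..N. rat_el (P k) (D k) x * y ^ k) = {0}"
proof -
  note hull = assms(4) and no_poles = assms(5) and vanish = assms(6)
  have q: "q \<noteq> 0" "(\<lambda>t. q ^ t) \<longlonglongrightarrow> 0"
    using assms(1,2) by (auto intro: LIMSEQ_power_zero)
  have "y * x = q *\<^sub>C (x * y)"
    using q(1) by (simp add: assms(3) scaleC_scaleC scaleC_one)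
  then have shift: "y * (q ^ t *\<^sub>C x) = (q ^ Suc t *\<^sub>C x) * y" for t
    by (simp add: mult_scaleC_left mult_scaleC_right scaleC_scaleC mult.commute)
  have spectrum_shift: "spectrum (q ^ t *\<^sub>C x) \<subseteq> spectrum x" for t
  proof -
    have "spectrum (q ^ t *\<^sub>C x) \<subseteq> (\<lambda>s. q ^ t * s) ` spectrum x"
      using q(1) by (intro spectrum_scaleC_subset) simp
    also have "\<dots> \<subseteq> q_hull q (spectrum x)"
      unfolding q_hull_def by blast
    finally show ?thesis
      using hull by simp
  qed
  have "0 \<in> spectrum x"
    using hull unfolding q_hull_def by blast
  then have D0: "poly (D k) 0 \<noteq> 0" and P0: "poly (P k) 0 = 0" if "k \<in> {1..N}" for k
    using that no_poles[of k] vanish[of k] by auto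
  have inv: "invertible_el (poly_el (D k) (q ^ t *\<^sub>C x))" if k: "k \<in> {1..N}" for k t
  proof (rule invertible_poly_el)
    show "D k \<noteq> 0"
      using D0[OF k] by auto
    show "\<forall>c\<in>spectrum (q ^ t *\<^sub>C x). poly (D k) c \<noteq> 0"
      using no_poles[of k] k spectrum_shift[of t] by auto
  qed
  have "spectrum (\<Sum>k=1..N. rat_el (P k) (D k) (q ^ 0 *\<^sub>C x) * y ^ k) = {0}"
  proof (rule spectrum_sum_twisted_eq_0)
    show "y * rat_el (P k) (D k) (q ^ t *\<^sub>C x) = rat_el (P k) (D k) (q ^ Suc t *\<^sub>C x) * y"
      if "k \<in> {1..N}" for k t
      using that by (intro rat_el_twisted_commute shift inv)
    show "(\<lambda>t. rat_el (P k) (D k) (q ^ t *\<^sub>C x)) \<longlonglongrightarrow> 0" if "k \<in> {1..N}" for k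
      using that by (intro rat_el_scaleC_tendsto_0 q(2) P0 D0 inv)
  qed
  then show ?thesis
    by (simp add: scaleC_one)
qed

end
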